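(* Let $\Lambda$ be an artin algebra, and let $f: X\to Y$ and $f': X'\to Y$ be epimorphisms of $\Lambda$-modules with isomorphic kernels. If there is $h: X\to X'$ with $f=f'h$, then $X'$ is a Riedtmann–Zwara degeneration of $X$.
   Context: Modules are finite length left $\Lambda$-modules. A module $M'$ is a Riedtmann–Zwara degeneration of $M$ if there exist a module $K$ and an exact sequence $0\to K\to K\oplus M\to M'\to 0$. *)

theory Defs
  imports "HOL-Algebra.Algebra"
begin

(* Left modules over a (not necessarily commutative) ring L, using the
   record type of HOL-Algebra.Module; only the additive structure and smult
   of a module record are meaningful. *)

definition lmodule :: "('r, 'x) ring_scheme \<Rightarrow> ('r, 'a) module \<Rightarrow> bool" where
  "lmodule L M \<longleftrightarrow> ring L \<and> abelian_group M \<and>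
     (\<forall>a\<in>carrier L. \<forall>x\<in>carrier M. smult M a x \<in> carrier M) \<and>
     (\<forall>a\<in>carrier L. \<forall>b\<in>carrier L. \<forall>x\<in>carrier M.
         smult M (a \<oplus>\<^bsub>L\<^esub> b) x = smult M a x \<oplus>\<^bsub>M\<^esub> smult M b x) \<and>
     (\<forall>a\<in>carrier L. \<forall>x\<in>carrier M. \<forall>y\<in>carrier M.
         smult M a (x \<oplus>\<^bsub>M\<^esub> y) = smult M a x \<oplus>\<^bsub>M\<^esub> smult M a y) \<and>
     (\<forall>a\<in>carrier L. \<forall>b\<in>carrier L. \<forall>x\<in>carrier M.
         smult M (a \<otimes>\<^bsub>L\<^esub> b) x = smult M a (smult M b x)) \<and>
     (\<forall>x\<in>carrier M. smult M \<one>\<^bsub>L\<^esub> x = x)"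

definition lsubmodule :: "('r, 'x) ring_scheme \<Rightarrow> 'a set \<Rightarrow> ('r, 'a) module \<Rightarrow> bool" where
  "lsubmodule L N M \<longleftrightarrow> N \<subseteq> carrier M \<and> \<zero>\<^bsub>M\<^esub> \<in> N \<and>
     (\<forall>x\<in>N. \<forall>y\<in>N. x \<oplus>\<^bsub>M\<^esub> y \<in> N) \<and>
     (\<forall>x\<in>N. \<ominus>\<^bsub>M\<^esub> x \<in> N) \<and>
     (\<forall>a\<in>carrier L. \<forall>x\<in>N. smult M a x \<in> N)"

definition finite_length :: "('r, 'x) ring_scheme \<Rightarrow> ('r, 'a) module \<Rightarrow> bool" where
  "finite_length L M \<longleftrightarrow> lmodule L M \<and>
     (\<exists>n::nat. \<forall>(k::nat) (c::nat \<Rightarrow> 'a set).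
        (\<forall>i\<le>k. lsubmodule L (c i) M) \<and> (\<forall>i<k. c i \<subset> c (Suc i)) \<longrightarrow> k \<le> n)"

definition lhom :: "('r, 'x) ring_scheme \<Rightarrow> ('r, 'a) module \<Rightarrow> ('r, 'b) module \<Rightarrow> ('a \<Rightarrow> 'b) \<Rightarrow> bool" where
  "lhom L M N f \<longleftrightarrow> f \<in> carrier M \<rightarrow> carrier N \<and>
     (\<forall>x\<in>carrier M. \<forall>y\<in>carrier M. f (x \<oplus>\<^bsub>M\<^esub> y) = f x \<oplus>\<^bsub>N\<^esub> f y) \<and>
     (\<forall>a\<in>carrier L. \<forall>x\<in>carrier M. f (smult M a x) = smult N a (f x))"

definition lker :: "('r, 'a) module \<Rightarrow> ('r, 'b) module \<Rightarrow> ('a \<Rightarrow> 'b) \<Rightarrow> 'a set" where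
  "lker M N f = {x \<in> carrier M. f x = \<zero>\<^bsub>N\<^esub>}"

definition subm :: "('r, 'a) module \<Rightarrow> 'a set \<Rightarrow> ('r, 'a) module" where
  "subm M S = M\<lparr>carrier := S\<rparr>"

definition liso :: "('r, 'x) ring_scheme \<Rightarrow> ('r, 'a) module \<Rightarrow> ('r, 'b) module \<Rightarrow> bool" where
  "liso L M N \<longleftrightarrow> (\<exists>f. lhom L M N f \<and> bij_betw f (carrier M) (carrier N))"

text \<open>Direct sum of modules (the multiplicative fields of the record are irrelevant junk).\<close>
definition dsum :: "('r, 'a) module \<Rightarrow> ('r, 'b) module \<Rightarrow> ('r, 'a \<times> 'b) module" where
  "dsum M N = module.make (carrier M \<times> carrier N)
     (\<lambda>_ _. (\<zero>\<^bsub>M\<^esub>, \<zero>\<^bsub>N\<^esub>))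
     (\<zero>\<^bsub>M\<^esub>, \<zero>\<^bsub>N\<^esub>)
     (\<zero>\<^bsub>M\<^esub>, \<zero>\<^bsub>N\<^esub>)
     (\<lambda>p q. (fst p \<oplus>\<^bsub>M\<^esub> fst q, snd p \<oplus>\<^bsub>N\<^esub> snd q))
     (\<lambda>a p. (smult M a (fst p), smult N a (snd p)))"

definition ring_center :: "('r, 'x) ring_scheme \<Rightarrow> 'r set" where
  "ring_center L = {z \<in> carrier L. \<forall>x\<in>carrier L. z \<otimes>\<^bsub>L\<^esub> x = x \<otimes>\<^bsub>L\<^esub> z}"

definition artinian_ring :: "('r, 'x) ring_scheme \<Rightarrow> bool" where
  "artinian_ring R \<longleftrightarrow> (\<forall>I :: nat \<Rightarrow> 'r set.
     (\<forall>n. ideal (I n) R) \<and> (\<forall>n. I (Suc n) \<subseteq> I n) \<longrightarrow> (\<exists>n. \<forall>m\<ge>n. I m = I n))"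

definition artin_algebra :: "('r, 'x) ring_scheme \<Rightarrow> bool" where
  "artin_algebra L \<longleftrightarrow> ring L \<and>
     (\<exists>C. subring C L \<and> C \<subseteq> ring_center L \<and> artinian_ring (L\<lparr>carrier := C\<rparr>) \<and>
        (\<exists>S. finite S \<and> S \<subseteq> carrier L \<and>
           (\<forall>x\<in>carrier L. \<exists>c \<in> S \<rightarrow> C. x = (\<Oplus>\<^bsub>L\<^esub> s\<in>S. c s \<otimes>\<^bsub>L\<^esub> s))))"

text \<open>Riedtmann--Zwara degeneration: there are a finite length module K and an exact sequence
  0 -> K -> K (+) M -> M' -> 0. K is taken with elements in the element type of M'.\<close>
definition rz_degeneration :: "('r, 'x) ring_scheme \<Rightarrow> ('r, 'a) module \<Rightarrow> ('r, 'c) module \<Rightarrow> bool" where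
  "rz_degeneration L M M' \<longleftrightarrow>
     (\<exists>(K :: ('r, 'c) module) i p.
        finite_length L K \<and>
        lhom L K (dsum K M) i \<and> inj_on i (carrier K) \<and>
        lhom L (dsum K M) M' p \<and> p ` carrier (dsum K M) = carrier M' \<and>
        i ` carrier K = lker (dsum K M) M' p)"

end

theory Submission
  imports Defs
begin

text \<open>Put K = ker f'. The map p: K \<oplus> X \<rightarrow> X', (k, x) \<mapsto> k + h x, is onto because
  f' z = f x gives z - h x \<in> K, and its kernel consists of the pairs (-h x, x) with
  h x \<in> K, i.e. with f x = f' (h x) = 0. So the kernel is the copy of ker f \<cong> K embedded
  by u \<mapsto> (-h u, u), which yields the exact sequence 0 \<rightarrow> K \<rightarrow> K \<oplus> X \<rightarrow> X' \<rightarrow> 0.\<close>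

lemma dsum_simps [simp]:
  "carrier (dsum M N) = carrier M \<times> carrier N"
  "p \<oplus>\<^bsub>dsum M N\<^esub> q = (fst p \<oplus>\<^bsub>M\<^esub> fst q, snd p \<oplus>\<^bsub>N\<^esub> snd q)"
  "\<zero>\<^bsub>dsum M N\<^esub> = (\<zero>\<^bsub>M\<^esub>, \<zero>\<^bsub>N\<^esub>)"
  "smult (dsum M N) a p = (smult M a (fst p), smult N a (snd p))"
  by (simp_all add: dsum_def module.defs)

lemma subm_simps [simp]:
  "carrier (subm M S) = S"
  "\<zero>\<^bsub>subm M S\<^esub> = \<zero>\<^bsub>M\<^esub>"
  "x \<oplus>\<^bsub>subm M S\<^esub> y = x \<oplus>\<^bsub>M\<^esub> y"
  "smult (subm M S) = smult M"
  by (simp_all add: subm_def)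

lemma lmodule_abelian_group: "lmodule L M \<Longrightarrow> abelian_group M"
  by (simp add: lmodule_def)

lemma lmodule_smult_closed:
  "lmodule L M \<Longrightarrow> a \<in> carrier L \<Longrightarrow> x \<in> carrier M \<Longrightarrow> smult M a x \<in> carrier M"
  by (simp add: lmodule_def)

lemma lmodule_smult_add_right:
  "lmodule L M \<Longrightarrow> a \<in> carrier L \<Longrightarrow> x \<in> carrier M \<Longrightarrow> y \<in> carrier M \<Longrightarrow>
     smult M a (x \<oplus>\<^bsub>M\<^esub> y) = smult M a x \<oplus>\<^bsub>M\<^esub> smult M a y"
  by (simp add: lmodule_def)

lemma lhomD:
  assumes "lhom L M N f"
  shows "x \<in> carrier M \<Longrightarrow> f x \<in> carrier N"
    and "x \<in> carrier M \<Longrightarrow> y \<in> carrier M \<Longrightarrow> f (x \<oplus>\<^bsub>M\<^esub> y) = f x \<oplus>\<^bsub>N\<^esub> f y"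
    and "a \<in> carrier L \<Longrightarrow> x \<in> carrier M \<Longrightarrow> f (smult M a x) = smult N a (f x)"
  using assms by (auto simp: lhom_def)

lemma lmodule_smult_zero:
  assumes "lmodule L M" "a \<in> carrier L"
  shows "smult M a \<zero>\<^bsub>M\<^esub> = \<zero>\<^bsub>M\<^esub>"
proof -
  interpret M: abelian_group M using assms(1) by (rule lmodule_abelian_group)
  have "smult M a \<zero>\<^bsub>M\<^esub> \<oplus>\<^bsub>M\<^esub> smult M a \<zero>\<^bsub>M\<^esub> = smult M a \<zero>\<^bsub>M\<^esub> \<oplus>\<^bsub>M\<^esub> \<zero>\<^bsub>M\<^esub>"
    using assms by (simp add: lmodule_smult_add_right[symmetric] lmodule_smult_closed)
  then show ?thesis
    using assms by (metis M.add.l_cancel M.zero_closed lmodule_smult_closed)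
qed

lemma lmodule_smult_a_inv:
  assumes "lmodule L M" "a \<in> carrier L" "x \<in> carrier M"
  shows "smult M a (\<ominus>\<^bsub>M\<^esub> x) = \<ominus>\<^bsub>M\<^esub> smult M a x"
proof -
  interpret M: abelian_group M using assms(1) by (rule lmodule_abelian_group)
  have "smult M a (\<ominus>\<^bsub>M\<^esub> x) \<oplus>\<^bsub>M\<^esub> smult M a x = \<zero>\<^bsub>M\<^esub>"
    using assms lmodule_smult_zero[OF assms(1,2)]
    by (simp add: lmodule_smult_add_right[symmetric] M.l_neg)
  then show ?thesis
    using assms by (metis M.minus_equality M.a_inv_closed lmodule_smult_closed)
qed

lemma lhom_zero:
  assumes "lhom L M N f" "abelian_group M" "abelian_group N"
  shows "f \<zero>\<^bsub>M\<^esub> = \<zero>\<^bsub>N\<^esub>"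
proof -
  interpret M: abelian_group M by fact
  interpret N: abelian_group N by fact
  have "f \<zero>\<^bsub>M\<^esub> \<oplus>\<^bsub>N\<^esub> f \<zero>\<^bsub>M\<^esub> = f \<zero>\<^bsub>M\<^esub> \<oplus>\<^bsub>N\<^esub> \<zero>\<^bsub>N\<^esub>"
    using lhomD[OF assms(1)] by (metis M.l_zero M.zero_closed N.r_zero)
  then show ?thesis
    using lhomD(1)[OF assms(1)] by (metis M.zero_closed N.add.l_cancel N.zero_closed)
qed

lemma lhom_a_inv:
  assumes "lhom L M N f" "abelian_group M" "abelian_group N" "x \<in> carrier M"
  shows "f (\<ominus>\<^bsub>M\<^esub> x) = \<ominus>\<^bsub>N\<^esub> f x"
proof -
  interpret M: abelian_group M by fact
  interpret N: abelian_group N by fact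
  have "f (\<ominus>\<^bsub>M\<^esub> x) \<oplus>\<^bsub>N\<^esub> f x = \<zero>\<^bsub>N\<^esub>"
    using assms(4) lhom_zero[OF assms(1-3)]
    by (simp add: lhomD(2)[OF assms(1), symmetric] M.l_neg)
  then show ?thesis
    using assms(4) by (metis lhomD(1)[OF assms(1)] N.minus_equality M.a_inv_closed)
qed

lemma lsubmodule_lker:
  assumes "lmodule L M" "lmodule L N" "lhom L M N f"
  shows "lsubmodule L (lker M N f) M"
proof -
  have ag: "abelian_group M" "abelian_group N"
    using assms(1,2) by (simp_all add: lmodule_abelian_group)
  interpret M: abelian_group M by fact
  interpret N: abelian_group N by fact
  show ?thesis
    using lmodule_smult_zero[OF assms(2)] lhomD[OF assms(3)] lhom_zero[OF assms(3) ag] lhom_a_inv[OF assms(3) ag]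
      lmodule_smult_closed[OF assms(1)]
    by (auto simp: lsubmodule_def lker_def)
qed

lemma lmodule_subm:
  assumes "lmodule L M" "lsubmodule L S M"
  shows "lmodule L (subm M S)"
proof -
  interpret M: abelian_group M using assms(1) by (rule lmodule_abelian_group)
  have S: "\<And>x. x \<in> S \<Longrightarrow> x \<in> carrier M" "\<zero>\<^bsub>M\<^esub> \<in> S" "\<And>x y. x \<in> S \<Longrightarrow> y \<in> S \<Longrightarrow> x \<oplus>\<^bsub>M\<^esub> y \<in> S"
    "\<And>x. x \<in> S \<Longrightarrow> \<ominus>\<^bsub>M\<^esub> x \<in> S" "\<And>a x. a \<in> carrier L \<Longrightarrow> x \<in> S \<Longrightarrow> smult M a x \<in> S"
    using assms(2) by (auto simp: lsubmodule_def)
  have "abelian_group (subm M S)"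
  proof (rule abelian_groupI)
    fix x assume "x \<in> carrier (subm M S)"
    then show "\<exists>y\<in>carrier (subm M S). y \<oplus>\<^bsub>subm M S\<^esub> x = \<zero>\<^bsub>subm M S\<^esub>"
      using S by (intro bexI[of _ "\<ominus>\<^bsub>M\<^esub> x"]) (auto simp: M.l_neg)
  qed (use S M.a_assoc M.a_comm in simp_all)
  then show ?thesis
    using assms(1) S(1,5) by (auto simp: lmodule_def)
qed

lemma subm_a_inv:
  assumes "lmodule L M" "lsubmodule L S M" "x \<in> S"
  shows "\<ominus>\<^bsub>subm M S\<^esub> x = \<ominus>\<^bsub>M\<^esub> x"
proof -
  interpret M: abelian_group M using assms(1) by (rule lmodule_abelian_group)
  interpret S: abelian_group "subm M S"
    using lmodule_subm[OF assms(1,2)] by (rule lmodule_abelian_group)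
  have "x \<in> carrier M" "\<ominus>\<^bsub>M\<^esub> x \<in> S"
    using assms(2,3) by (auto simp: lsubmodule_def)
  then show ?thesis
    using S.minus_equality[of "\<ominus>\<^bsub>M\<^esub> x" x] assms(3) by (simp add: M.l_neg)
qed

lemma finite_length_subm:
  assumes "finite_length L M" "lsubmodule L S M"
  shows "finite_length L (subm M S)"
proof -
  have M: "lmodule L M" using assms(1) by (simp add: finite_length_def)
  have sub: "lsubmodule L T M" if T: "lsubmodule L T (subm M S)" for T
  proof -
    have TS: "T \<subseteq> S" using T by (simp add: lsubmodule_def)
    have "\<ominus>\<^bsub>M\<^esub> x \<in> T" if "x \<in> T" for x
    proof -
      have "\<ominus>\<^bsub>subm M S\<^esub> x \<in> T" using T that by (simp add: lsubmodule_def)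
      then show ?thesis using subm_a_inv[OF M assms(2)] that TS by auto
    qed
    then show ?thesis
      using T assms(2) TS by (auto simp: lsubmodule_def)
  qed
  obtain n where n: "\<And>k c. (\<forall>i\<le>k. lsubmodule L (c i) M) \<Longrightarrow> (\<forall>i<k. c i \<subset> c (Suc i)) \<Longrightarrow> k \<le> n"
    using assms(1) unfolding finite_length_def by blast
  show ?thesis
    unfolding finite_length_def
    using lmodule_subm[OF M assms(2)] n sub by blast
qed

lemma lhom_comp:
  "lhom L A B g \<Longrightarrow> lhom L B C k \<Longrightarrow> lhom L A C (\<lambda>x. k (g x))"
  by (auto simp: lhom_def Pi_iff)

lemma lhom_subm_incl: "S \<subseteq> carrier M \<Longrightarrow> lhom L (subm M S) M (\<lambda>x. x)"
  by (auto simp: lhom_def)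

lemma lhom_into_subm:
  "lhom L K M g \<Longrightarrow> g ` carrier K \<subseteq> S \<Longrightarrow> lhom L K (subm M S) g"
  by (auto simp: lhom_def)

lemma lhom_a_inv_map:
  assumes "lmodule L M"
  shows "lhom L M M (a_inv M)"
proof -
  interpret M: abelian_group M using assms by (rule lmodule_abelian_group)
  show ?thesis
    using lmodule_smult_a_inv[OF assms] by (auto simp: lhom_def M.minus_add)
qed

lemma lhom_dsum_pair:
  "lhom L K A a \<Longrightarrow> lhom L K B b \<Longrightarrow> lhom L K (dsum A B) (\<lambda>x. (a x, b x))"
  by (auto simp: lhom_def)

lemma lhom_dsum_copair:
  assumes "lmodule L C" "lhom L A C a" "lhom L B C b"
  shows "lhom L (dsum A B) C (\<lambda>q. a (fst q) \<oplus>\<^bsub>C\<^esub> b (snd q))"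
proof -
  interpret C: abelian_group C using assms(1) by (rule lmodule_abelian_group)
  show ?thesis
    using lhomD[OF assms(2)] lhomD[OF assms(3)] lmodule_smult_add_right[OF assms(1)]
    by (auto simp: lhom_def C.a_ac)
qed

lemma lhom_inv_into:
  assumes "lmodule L A" "lhom L A B g" "bij_betw g (carrier A) (carrier B)"
  shows "lhom L B A (inv_into (carrier A) g)"
proof -
  let ?g' = "inv_into (carrier A) g"
  have inv: "\<And>y. y \<in> carrier B \<Longrightarrow> ?g' y \<in> carrier A \<and> g (?g' y) = y"
    using assms(3) by (simp add: bij_betw_inv_into_right bij_betw_imp_surj_on inv_into_into)
  have inj: "inj_on g (carrier A)"
    using assms(3) by (simp add: bij_betw_def)
  interpret A: abelian_group A using assms(1) by (rule lmodule_abelian_group)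
  have "?g' (x \<oplus>\<^bsub>B\<^esub> y) = ?g' x \<oplus>\<^bsub>A\<^esub> ?g' y"
    if "x \<in> carrier B" "y \<in> carrier B" for x y
    using inv[OF that(1)] inv[OF that(2)] lhomD(2)[OF assms(2)]
    by (intro inv_into_f_eq[OF inj]) auto
  moreover have "?g' (smult B a x) = smult A a (?g' x)"
    if "a \<in> carrier L" "x \<in> carrier B" for a x
    using inv[OF that(2)] lhomD(3)[OF assms(2) that(1)] lmodule_smult_closed[OF assms(1) that(1)]
    by (intro inv_into_f_eq[OF inj]) auto
  ultimately show ?thesis
    using inv by (auto simp: lhom_def)
qed

lemma liso_sym: "lmodule L A \<Longrightarrow> liso L A B \<Longrightarrow> liso L B A"
  unfolding liso_def by (metis lhom_inv_into bij_betw_inv_into)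

lemma lker_add_a_inv:
  assumes "lhom L M N f" "abelian_group M" "abelian_group N"
    and "x \<in> carrier M" "y \<in> carrier M" "f x = f y"
  shows "x \<oplus>\<^bsub>M\<^esub> \<ominus>\<^bsub>M\<^esub> y \<in> lker M N f"
proof -
  interpret M: abelian_group M by fact
  interpret N: abelian_group N by fact
  show ?thesis
    using assms(4-6) lhomD[OF assms(1)] lhom_a_inv[OF assms(1-3)]
    by (simp add: lker_def N.r_neg)
qed

lemma rz_degeneration_of_submodules:
  assumes M: "lmodule L M" and M': "finite_length L M'"
    and h: "lhom L M M' h"
    and S: "lsubmodule L S M'" and U: "lsubmodule L U M"
    and iso: "liso L (subm M' S) (subm M U)"
    and span: "\<And>z. z \<in> carrier M' \<Longrightarrow> \<exists>s\<in>S. \<exists>m\<in>carrier M. z = s \<oplus>\<^bsub>M'\<^esub> h m"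
    and preimage: "\<And>m. m \<in> carrier M \<Longrightarrow> h m \<in> S \<longleftrightarrow> m \<in> U"
  shows "rz_degeneration L M M'"
proof -
  have lmM': "lmodule L M'" using M' by (simp add: finite_length_def)
  interpret M': abelian_group M' using lmM' by (rule lmodule_abelian_group)
  have SM': "S \<subseteq> carrier M'" and S_a_inv: "\<And>s. s \<in> S \<Longrightarrow> \<ominus>\<^bsub>M'\<^esub> s \<in> S"
    using S by (auto simp: lsubmodule_def)
  have UM: "U \<subseteq> carrier M" using U by (simp add: lsubmodule_def)
  obtain \<phi> where \<phi>_hom: "lhom L (subm M' S) (subm M U) \<phi>" and \<phi>_bij: "bij_betw \<phi> S U"
    using iso by (auto simp: liso_def)
  define K where "K = subm M' S"
  define i where "i = (\<lambda>u. (\<ominus>\<^bsub>M'\<^esub> h (\<phi> u), \<phi> u))"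
  define p where "p = (\<lambda>q. fst q \<oplus>\<^bsub>M'\<^esub> h (snd q))"
  have \<phi>U: "\<And>u. u \<in> S \<Longrightarrow> \<phi> u \<in> U" using \<phi>_bij by (simp add: bij_betwE)
  have \<phi>M: "lhom L K M \<phi>"
    unfolding K_def using lhom_comp[OF \<phi>_hom lhom_subm_incl[OF UM]] .
  have h\<phi>: "\<And>u. u \<in> S \<Longrightarrow> h (\<phi> u) \<in> S" using \<phi>U UM preimage by blast
  have "lhom L K M' (\<lambda>u. \<ominus>\<^bsub>M'\<^esub> h (\<phi> u))"
    using lhom_comp[OF lhom_comp[OF \<phi>M h] lhom_a_inv_map[OF lmM']] .
  then have "lhom L K K (\<lambda>u. \<ominus>\<^bsub>M'\<^esub> h (\<phi> u))"
    unfolding K_def using h\<phi> S_a_inv by (intro lhom_into_subm) auto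
  then have i_hom: "lhom L K (dsum K M) i"
    unfolding i_def using \<phi>M by (rule lhom_dsum_pair)
  have p_hom: "lhom L (dsum K M) M' p"
    unfolding p_def K_def using lhom_dsum_copair[OF lmM' lhom_subm_incl[OF SM'] h] by simp
  have i_inj: "inj_on i (carrier K)"
    using \<phi>_bij by (auto simp: K_def i_def bij_betw_def inj_on_def)
  have p_surj: "p ` carrier (dsum K M) = carrier M'"
  proof
    show "p ` carrier (dsum K M) \<subseteq> carrier M'"
      using lhomD(1)[OF p_hom] by blast
    show "carrier M' \<subseteq> p ` carrier (dsum K M)"
      using span by (force simp: K_def p_def)
  qed
  have i_ker: "i ` carrier K = lker (dsum K M) M' p"
  proof
    show "i ` carrier K \<subseteq> lker (dsum K M) M' p"
      using lhomD(1)[OF i_hom] lhomD(1)[OF h] \<phi>U UM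
      by (auto simp: K_def lker_def i_def p_def M'.l_neg)
    show "lker (dsum K M) M' p \<subseteq> i ` carrier K"
    proof
      fix q assume q: "q \<in> lker (dsum K M) M' p"
      obtain s m where q_eq: "q = (s, m)" by (cases q)
      have s: "s \<in> S" and m: "m \<in> carrier M" and sum: "s \<oplus>\<^bsub>M'\<^esub> h m = \<zero>\<^bsub>M'\<^esub>"
        using q by (auto simp: q_eq lker_def K_def p_def)
      have hm: "h m = \<ominus>\<^bsub>M'\<^esub> s"
        using sum s SM' lhomD(1)[OF h m] by (metis M'.a_comm M'.minus_equality subsetD)
      then have "m \<in> U" using preimage[OF m] S_a_inv[OF s] by simp
      then obtain u where u: "u \<in> S" "m = \<phi> u"
        using \<phi>_bij by (metis bij_betw_imp_surj_on imageE)
      have "s = \<ominus>\<^bsub>M'\<^esub> h m" using hm s SM' by (simp add: subsetD)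
      then show "q \<in> i ` carrier K"
        using u by (auto simp: q_eq i_def K_def)
    qed
  qed
  have "finite_length L K"
    unfolding K_def using M' S by (rule finite_length_subm)
  then show ?thesis
    unfolding rz_degeneration_def using i_hom i_inj p_hom p_surj i_ker by blast
qed

theorem proposition8p7:
  fixes L :: "'r ring"
    and M :: "('r, 'a) module" and M' :: "('r, 'c) module" and N :: "('r, 'b) module"
    and f :: "'a \<Rightarrow> 'b" and f' :: "'c \<Rightarrow> 'b" and h :: "'a \<Rightarrow> 'c"
  assumes "artin_algebra L"
    and "finite_length L M" and "finite_length L M'" and "finite_length L N"
    and "lhom L M N f" and "f ` carrier M = carrier N"
    and "lhom L M' N f'" and "f' ` carrier M' = carrier N"
    and "liso L (subm M (lker M N f)) (subm M' (lker M' N f'))"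
    and "lhom L M M' h" and "\<forall>x\<in>carrier M. f x = f' (h x)"
  shows "rz_degeneration L M M'"
proof -
  have M: "lmodule L M" and M': "lmodule L M'" and N: "lmodule L N"
    using assms(2-4) by (simp_all add: finite_length_def)
  interpret M': abelian_group M' using M' by (rule lmodule_abelian_group)
  have ker: "lsubmodule L (lker M N f) M" "lsubmodule L (lker M' N f') M'"
    using lsubmodule_lker M M' N assms(5,7) by blast+
  have span: "\<exists>s\<in>lker M' N f'. \<exists>m\<in>carrier M. z = s \<oplus>\<^bsub>M'\<^esub> h m" if z: "z \<in> carrier M'" for z
  proof -
    obtain m where m: "m \<in> carrier M" "f' (h m) = f' z"
      using z assms(6,11) lhomD(1)[OF assms(7)] by (metis imageE)
    have hm: "h m \<in> carrier M'" using lhomD(1)[OF assms(10) m(1)] .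
    have "z \<oplus>\<^bsub>M'\<^esub> \<ominus>\<^bsub>M'\<^esub> h m \<in> lker M' N f'"
      using lker_add_a_inv[OF assms(7) _ _ z hm] m(2) M' N by (simp add: lmodule_abelian_group)
    moreover have "z = (z \<oplus>\<^bsub>M'\<^esub> \<ominus>\<^bsub>M'\<^esub> h m) \<oplus>\<^bsub>M'\<^esub> h m"
      using z hm by (simp add: M'.a_assoc M'.l_neg)
    ultimately show ?thesis using m(1) by blast
  qed
  have preimage: "h m \<in> lker M' N f' \<longleftrightarrow> m \<in> lker M N f" if "m \<in> carrier M" for m
    using that assms(11) lhomD(1)[OF assms(10)] by (simp add: lker_def)
  show ?thesis
    using rz_degeneration_of_submodules[OF M assms(3,10) ker(2,1)
        liso_sym[OF lmodule_subm[OF M ker(1)] assms(9)]] span preimage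
    by blast
qed

end
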